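(* Let $\mathcal{G}=(\mathcal{V},\mathcal{E})$ be an undirected graph with $|\mathcal{N}_i|\ge (d+1)F+1$ for every $i\in\mathcal{V}$, and suppose the misbehaving agents follow the $F$-local attack model. If $\mathcal{G}$ is $((d+1)F+1)$-robust, then when the benign agents run the resilient multi-dimensional consensus algorithm described in the context, all benign agents achieve consensus exponentially regardless of the actions of the misbehaving agents: there is $\bar{x}\in\mathbb{R}^d$ with $x^i(k)\to\bar{x}$ exponentially fast as $k\to\infty$ for all $i\in\mathcal{B}$.
   Context: $\mathcal{G}=(\mathcal{V},\mathcal{E})$ is undirected, $\mathcal{N}_i=\{j\in\mathcal{V}: e_{ij}\in\mathcal{E}\}$. $\mathcal{G}$ is $r$-robust if for every pair of disjoint nonempty subsets $\mathcal{V}_1,\mathcal{V}_2\subsetneq\mathcal{V}$, some agent in $\mathcal{V}_1$ has at least $r$ neighbors outside $\mathcal{V}_1$, or some agent in $\mathcal{V}_2$ has at least $r$ neighbors outside $\mathcal{V}_2$. $\mathcal{V}=\mathcal{B}\cup\mathcal{F}$ disjointly; $\mathcal{F}$ are misbehaving agents, which may send arbitrary (possibly different to different neighbors, possibly colluding) values at each time; $\mathcal{B}$ are benign agents following the algorithm. $F$-local attack model: $|\mathcal{F}\cap\mathcal{N}_i|\le F$ for all $i\in\mathcal{V}$. For a finite multiset $\mathcal{A}\subset\mathbb{R}^d$ of cardinality $m$ (counted with multiplicity) and integer $0\le n\le m$, let $\mathcal{S}(\mathcal{A},n)$ be the collection of all sub-multisets of $\mathcal{A}$ of cardinality $m-n$,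 and $\varPsi(\mathcal{A},n)=\bigcap_{S\in\mathcal{S}(\mathcal{A},n)}\mathrm{Conv}(S)$. Algorithm: each benign agent $i$ has state $x^i(k)\in\mathbb{R}^d$, $x^i(0)$ arbitrary. At each time $k$: (1) $i$ collects in the multiset $\mathcal{X}^i(k)$ the values received from all $j\in\mathcal{N}_i$; (2) with $p=(k \bmod d)+1$, it sorts the points of $\mathcal{X}^i(k)$ in ascending order of their $p$-th entries; (3) $\mathcal{Y}^i(k)$ is the multiset of the first $(d+1)F+1$ sorted points, and $y^i(k)$ is any point of $\varPsi(\mathcal{Y}^i(k),F)$; (4) $\mathcal{Z}^i(k)$ is the multiset of the last $(d+1)F+1$ sorted points, and $z^i(k)$ is any point of $\varPsi(\mathcal{Z}^i(k),F)$; (5) $x^i(k+1)=\frac{1}{3}\big(x^i(k)+y^i(k)+z^i(k)\big)$, which is sent to all neighbors. *)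

theory Defs
  imports "HOL-Analysis.Analysis" "HOL-Library.Multiset"
begin

definition undirected_graph :: "'v set \<Rightarrow> ('v \<Rightarrow> 'v \<Rightarrow> bool) \<Rightarrow> bool" where
  "undirected_graph V E \<longleftrightarrow> finite V \<and> (\<forall>i j. E i j \<longrightarrow> i \<in> V \<and> j \<in> V)
     \<and> (\<forall>i j. E i j \<longrightarrow> E j i) \<and> (\<forall>i. \<not> E i i)"

definition nbrs :: "'v set \<Rightarrow> ('v \<Rightarrow> 'v \<Rightarrow> bool) \<Rightarrow> 'v \<Rightarrow> 'v set" where
  "nbrs V E i = {j \<in> V. E i j}"

definition r_robust :: "'v set \<Rightarrow> ('v \<Rightarrow> 'v \<Rightarrow> bool) \<Rightarrow> nat \<Rightarrow> bool" where
  "r_robust V E r \<longleftrightarrow>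
     (\<forall>V1 V2. V1 \<subset> V \<and> V2 \<subset> V \<and> V1 \<noteq> {} \<and> V2 \<noteq> {} \<and> V1 \<inter> V2 = {} \<longrightarrow>
        (\<exists>i\<in>V1. card (nbrs V E i - V1) \<ge> r) \<or> (\<exists>i\<in>V2. card (nbrs V E i - V2) \<ge> r))"

definition f_local :: "'v set \<Rightarrow> ('v \<Rightarrow> 'v \<Rightarrow> bool) \<Rightarrow> 'v set \<Rightarrow> nat \<Rightarrow> bool" where
  "f_local V E Fa f \<longleftrightarrow> (\<forall>i\<in>V. card (Fa \<inter> nbrs V E i) \<le> f)"

definition Psi :: "'a::real_vector multiset \<Rightarrow> nat \<Rightarrow> 'a set" where
  "Psi A n = \<Inter> {convex hull (set_mset S) | S. S \<subseteq># A \<and> size S = size A - n}"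

definition coord_at :: "nat \<Rightarrow> 'd::enum" where
  "coord_at k = (Enum.enum :: 'd list) ! (k mod CARD('d))"

text \<open>One step of the algorithm at benign agent i at time k.
  rcv j is the value i received from neighbour j at time k.\<close>
definition alg_update ::
  "nat \<Rightarrow> nat \<Rightarrow> 'v set \<Rightarrow> ('v \<Rightarrow> real^'d::enum) \<Rightarrow> real^'d::enum \<Rightarrow> real^'d::enum \<Rightarrow> bool" where
  "alg_update f k N rcv xold xnew \<longleftrightarrow>
     (let m = (CARD('d::enum) + 1) * f + 1 in
      \<exists>L y z. mset L = image_mset rcv (mset_set N)
        \<and> sorted_wrt (\<lambda>a b. a $ coord_at k \<le> b $ coord_at k) L
        \<and> y \<in> Psi (mset (take m L)) f
        \<and> z \<in> Psi (mset (drop (length L - m) L)) f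
        \<and> xnew = (1/3) *\<^sub>R (xold + y + z))"

text \<open>An execution: x k i is the state of benign agent i at time k; msg k i j is the value
  received by i from neighbour j at time k (the true state if j is benign, arbitrary otherwise).\<close>
definition resilient_run ::
  "'v set \<Rightarrow> ('v \<Rightarrow> 'v \<Rightarrow> bool) \<Rightarrow> 'v set \<Rightarrow> nat \<Rightarrow>
   (nat \<Rightarrow> 'v \<Rightarrow> real^'d::enum) \<Rightarrow> (nat \<Rightarrow> 'v \<Rightarrow> 'v \<Rightarrow> real^'d::enum) \<Rightarrow> bool" where
  "resilient_run V E Fa f x msg \<longleftrightarrow>
     (\<forall>k. \<forall>i\<in>V - Fa. \<forall>j\<in>nbrs V E i - Fa. msg k i j = x k j)
     \<and> (\<forall>k. \<forall>i\<in>V - Fa. alg_update f k (nbrs V E i) (msg k i) (x k i) (x (Suc k) i))"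

end

theory Submission
  imports Defs
begin

(* Fix a coordinate q and let M k and m k be the largest and smallest q-th entries of the
  benign states. A point of Psi A F lies in the convex hull of every |A| - F points of A, so
  y and z lie in the convex hull of the benign neighbours' states: M never increases and
  m never decreases. At a step that sorts by q, a benign agent with (d+1)F+1 neighbours whose
  q-th entries are at most c has at least dF+1 such benign neighbours, so y is at most c in
  coordinate q. Hence the benign agents lying within a margin below M, and those within a
  margin above m, form two disjoint sets, and robustness makes one of them lose an agent at
  every step sorting by q. After d(n+1) steps one set is empty and M - m has contracted by a
  fixed factor; this periodic contraction gives geometric convergence to the point common to
  all the nested intervals [m k, M k]. *)

lemma convex_component_le: "convex {v :: real^'n. v $ q \<le> c}"
  using convex_halfspace_le[of "axis q 1" c] by (simp add: cart_eq_inner_axis inner_commute)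

lemma convex_component_ge: "convex {v :: real^'n. c \<le> v $ q}"
  using convex_halfspace_ge[of c "axis q 1"] by (simp add: cart_eq_inner_axis inner_commute)

lemma convex_hull_component_le:
  fixes y :: "real^'n"
  assumes "y \<in> convex hull X" "\<And>a. a \<in> X \<Longrightarrow> a $ q \<le> c"
  shows "y $ q \<le> c"
  using hull_minimal[of X "{v. v $ q \<le> c}" convex] convex_component_le assms by blast

lemma convex_hull_component_ge:
  fixes y :: "real^'n"
  assumes "y \<in> convex hull X" "\<And>a. a \<in> X \<Longrightarrow> c \<le> a $ q"
  shows "c \<le> y $ q"
  using hull_minimal[of X "{v. c \<le> v $ q}" convex] convex_component_ge assms by blast

lemma mset_take_subseteq: "mset (take n xs) \<subseteq># mset xs"
  by (metis append_take_drop_id mset_append mset_subset_eq_add_left)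

lemma Psi_subset_convex:
  assumes "convex C" and "size (filter_mset (\<lambda>a. a \<notin> C) A) \<le> n"
  shows "Psi A n \<subseteq> C"
proof -
  let ?good = "filter_mset (\<lambda>a. a \<in> C) A"
  have "size A = size ?good + size (filter_mset (\<lambda>a. a \<notin> C) A)"
    by (metis multiset_partition size_union)
  then have "size A - n \<le> size ?good" using assms(2) by linarith
  moreover obtain xs where xs: "mset xs = ?good" using ex_mset by blast
  ultimately have len: "size A - n \<le> length xs" by (metis size_mset)
  define S where "S = mset (take (size A - n) xs)"
  have "S \<subseteq># mset xs"
    unfolding S_def by (rule mset_take_subseteq)
  moreover have "size S = size A - n" unfolding S_def using len by simp
  ultimately have S: "S \<subseteq># ?good" "size S = size A - n" using xs by auto
  then have "Psi A n \<subseteq> convex hull set_mset S"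
    unfolding Psi_def using multiset_filter_subset subset_mset.order_trans by blast
  also have "\<dots> \<subseteq> C"
    using S(1) assms(1) by (intro hull_minimal) (auto dest: mset_subset_eqD)
  finally show ?thesis .
qed

lemma length_filter_take_sorted:
  fixes g :: "'a \<Rightarrow> 'b::linorder"
  assumes "sorted_wrt (\<lambda>a b. g a \<le> g b) xs"
  shows "min n (length (filter (\<lambda>a. g a \<le> c) xs)) \<le> length (filter (\<lambda>a. g a \<le> c) (take n xs))"
  using assms
proof (induction xs arbitrary: n)
  case Nil
  then show ?case by simp
next
  case (Cons a xs)
  show ?case
  proof (cases n)
    case (Suc n')
    show ?thesis
    proof (cases "g a \<le> c")
      case True
      then show ?thesis using Cons Suc by auto
    next
      case False
      then have "filter (\<lambda>a. g a \<le> c) xs = []"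
        using Cons.prems by (auto simp: filter_empty_conv)
      then show ?thesis using False by simp
    qed
  qed simp
qed

lemma Psi_take_sorted_subset:
  fixes g :: "'a::real_vector \<Rightarrow> 'b::linorder"
  assumes "sorted_wrt (\<lambda>a b. g a \<le> g b) xs" and "convex {a. g a \<le> c}"
    and "n - f \<le> length (filter (\<lambda>a. g a \<le> c) xs)"
  shows "Psi (mset (take n xs)) f \<subseteq> {a. g a \<le> c}"
proof (rule Psi_subset_convex[OF assms(2)])
  let ?ys = "take n xs"
  have "n - f \<le> length (filter (\<lambda>a. g a \<le> c) ?ys)"
    using length_filter_take_sorted[OF assms(1), of n c] assms(3) by linarith
  moreover have "length (filter (\<lambda>a. g a \<le> c) ?ys) + length (filter (\<lambda>a. \<not> g a \<le> c) ?ys) \<le> n"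
    by (simp add: sum_length_filter_compl)
  ultimately show "size (filter_mset (\<lambda>a. a \<notin> {a. g a \<le> c}) (mset ?ys)) \<le> f"
    by (simp flip: mset_filter)
qed

lemma alg_update_bounds:
  fixes rcv :: "'v \<Rightarrow> real^'d::enum"
  assumes upd: "alg_update f k N rcv xold xnew"
    and fin: "finite N" and outliers: "card (N - G) \<le> f"
  obtains y z where "xnew = (1/3) *\<^sub>R (xold + y + z)"
    and "y \<in> convex hull (rcv ` G)" and "z \<in> convex hull (rcv ` G)"
    and "\<And>c. CARD('d) * f + 1 \<le> card {j \<in> N. rcv j $ coord_at k \<le> c} \<Longrightarrow> y $ coord_at k \<le> c"
    and "\<And>c. CARD('d) * f + 1 \<le> card {j \<in> N. c \<le> rcv j $ coord_at k} \<Longrightarrow> c \<le> z $ coord_at k"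
proof -
  define m where "m = (CARD('d) + 1) * f + 1"
  define p :: 'd where "p = coord_at k"
  \<comment> \<open>The last m points of L are, in reverse order, the first m points of rev L.\<close>
  obtain L y z where L: "mset L = image_mset rcv (mset_set N)"
    and sorted: "sorted_wrt (\<lambda>a b. a $ p \<le> b $ p) L"
    and y: "y \<in> Psi (mset (take m L)) f"
    and z: "z \<in> Psi (mset (take m (rev L))) f"
    and xnew: "xnew = (1/3) *\<^sub>R (xold + y + z)"
    using upd unfolding alg_update_def m_def p_def Let_def by (auto simp: take_rev)
  have count: "size (filter_mset P (mset L)) = card {j \<in> N. P (rcv j)}" for P
    using fin by (simp add: L filter_mset_image_mset filter_mset_mset_set)
  have "size (filter_mset (\<lambda>a. a \<notin> convex hull (rcv ` G)) (mset L)) \<le> f"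
  proof -
    have "{j \<in> N. rcv j \<notin> convex hull (rcv ` G)} \<subseteq> N - G"
      by (auto intro: hull_inc)
    then show ?thesis
      unfolding count using fin outliers by (meson card_mono finite_Diff le_trans)
  qed
  then have "size (filter_mset (\<lambda>a. a \<notin> convex hull (rcv ` G)) (mset (take m xs))) \<le> f"
    if "mset xs = mset L" for xs
    using that mset_take_subseteq multiset_filter_mono size_mset_mono le_trans by metis
  then have hull: "Psi (mset (take m xs)) f \<subseteq> convex hull (rcv ` G)" if "mset xs = mset L" for xs
    using that by (intro Psi_subset_convex) auto
  have m: "m - f = CARD('d) * f + 1" unfolding m_def by simp
  have length_filter: "length (filter P xs) = card {j \<in> N. P (rcv j)}" if "mset xs = mset L" for P xs
    using count[of P] that by (metis mset_filter size_mset)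
  have "y $ p \<le> c" if "CARD('d) * f + 1 \<le> card {j \<in> N. rcv j $ p \<le> c}" for c
    using Psi_take_sorted_subset[OF sorted convex_component_le, of m f] y that
    by (auto simp: m length_filter)
  moreover have "c \<le> z $ p" if "CARD('d) * f + 1 \<le> card {j \<in> N. c \<le> rcv j $ p}" for c
  proof -
    have "sorted_wrt (\<lambda>a b. - a $ p \<le> - b $ p) (rev L)"
      using sorted by (simp add: sorted_wrt_rev)
    moreover have "convex {a. - a $ p \<le> - c}"
      using convex_component_ge[of c p] by simp
    ultimately show ?thesis
      using Psi_take_sorted_subset[of "\<lambda>a. - a $ p" "rev L" "- c" m f] z that
      by (auto simp: m length_filter)
  qed
  moreover have "y \<in> convex hull (rcv ` G)" "z \<in> convex hull (rcv ` G)"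
    using hull[of L] hull[of "rev L"] y z by auto
  ultimately show ?thesis
    using that xnew unfolding p_def by blast
qed

lemma coord_at_add_period: "coord_at (k + CARD('d) * j) = (coord_at k :: 'd::enum)"
  unfolding coord_at_def by simp

lemma coord_at_within_period:
  obtains r where "r < CARD('d::enum)" and "coord_at (k + r) = (q :: 'd)"
proof -
  define d where "d = CARD('d)"
  obtain idx where idx: "idx < d" "(Enum.enum :: 'd list) ! idx = q"
    using in_enum[of q] unfolding d_def card_UNIV_length_enum by (metis in_set_conv_nth)
  define r where "r = (idx + (d - 1) * k) mod d"
  have "d > 0" unfolding d_def by simp
  then have "k + (idx + (d - 1) * k) = idx + d * k"
    by (cases d) auto
  then have "(k + r) mod d = (idx + d * k) mod d"
    unfolding r_def by (metis mod_add_right_eq)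
  also have "\<dots> = idx" using idx by simp
  finally have "coord_at (k + r) = q" unfolding coord_at_def d_def using idx d_def by simp
  moreover have "r < d" unfolding r_def using \<open>d > 0\<close> by simp
  ultimately show ?thesis using that unfolding d_def by blast
qed

lemma periodic_contraction_geometric_decay:
  fixes w :: "nat \<Rightarrow> real"
  assumes antimono: "\<And>k. w (Suc k) \<le> w k"
    and contract: "\<And>k. w (k + T) \<le> c * w k"
    and "0 < T" "0 < c" "c < 1" "0 \<le> w 0"
  obtains C \<gamma> where "0 \<le> C" "0 \<le> \<gamma>" "\<gamma> < 1" "\<And>k. w k \<le> C * \<gamma> ^ k"
proof
  define \<gamma> where "\<gamma> = root T c"
  show "0 \<le> w 0 / c" "0 \<le> \<gamma>" "\<gamma> < 1"
    unfolding \<gamma>_def using assms by (auto simp: real_root_ge_zero)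
  have \<gamma>T: "\<gamma> ^ T = c" unfolding \<gamma>_def using assms by (simp add: real_root_pow_pos2)
  have blocks: "w (T * j) \<le> c ^ j * w 0" for j
  proof (induction j)
    case (Suc j)
    have "w (T * Suc j) \<le> c * w (T * j)" using contract[of "T * j"] by (simp add: add.commute)
    also have "\<dots> \<le> c * (c ^ j * w 0)" using Suc.IH \<open>0 < c\<close> by simp
    finally show ?case by simp
  qed simp
  fix k
  have "k = T * (k div T) + k mod T" by simp
  then have "k \<le> T * (k div T) + T"
    using mod_less_divisor[OF \<open>0 < T\<close>, of k] by linarith
  then have "c ^ (k div T) * c \<le> \<gamma> ^ k"
    using power_decreasing[of k "T * (k div T) + T" \<gamma>] \<open>0 \<le> \<gamma>\<close> \<open>\<gamma> < 1\<close>
    by (simp add: power_add power_mult \<gamma>T)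
  then have pow: "c ^ (k div T) \<le> \<gamma> ^ k / c"
    using \<open>0 < c\<close> by (simp add: field_simps)
  have "w k \<le> w (T * (k div T))"
    using lift_Suc_antimono_le[of w] antimono by (simp add: div_times_less_eq_dividend)
  also have "\<dots> \<le> c ^ (k div T) * w 0" by (rule blocks)
  also have "\<dots> \<le> \<gamma> ^ k / c * w 0" using pow \<open>0 \<le> w 0\<close> by (rule mult_right_mono)
  finally show "w k \<le> w 0 / c * \<gamma> ^ k" by (simp add: mult.commute)
qed

locale resilient_consensus =
  fixes V :: "'v set" and E :: "'v \<Rightarrow> 'v \<Rightarrow> bool" and Fa :: "'v set" and f :: nat
    and x :: "nat \<Rightarrow> 'v \<Rightarrow> real^'d::enum" and msg :: "nat \<Rightarrow> 'v \<Rightarrow> 'v \<Rightarrow> real^'d::enum"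
  assumes finite_V: "finite V"
    and local_attack: "f_local V E Fa f"
    and robust: "r_robust V E ((CARD('d::enum) + 1) * f + 1)"
    and run: "resilient_run V E Fa f x msg"
    and benign_nonempty: "V - Fa \<noteq> {}"
begin

definition max_state :: "nat \<Rightarrow> 'd \<Rightarrow> real" where
  "max_state k q = Max ((\<lambda>i. x k i $ q) ` (V - Fa))"

definition min_state :: "nat \<Rightarrow> 'd \<Rightarrow> real" where
  "min_state k q = Min ((\<lambda>i. x k i $ q) ` (V - Fa))"

definition spread :: "nat \<Rightarrow> 'd \<Rightarrow> real" where
  "spread k q = max_state k q - min_state k q"

lemma finite_nbrs: "finite (nbrs V E i)"
  using finite_V unfolding nbrs_def by simp

lemma nbrs_subset: "nbrs V E i \<subseteq> V"
  unfolding nbrs_def by blast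

lemma state_le_max_state: "i \<in> V - Fa \<Longrightarrow> x k i $ q \<le> max_state k q"
  unfolding max_state_def using finite_V by (intro Max_ge) auto

lemma min_state_le_state: "i \<in> V - Fa \<Longrightarrow> min_state k q \<le> x k i $ q"
  unfolding min_state_def using finite_V by (intro Min_le) auto

lemma card_nbrs_diff_le: "i \<in> V \<Longrightarrow> card (nbrs V E i - S) \<le> card (nbrs V E i - Fa - S) + f"
proof -
  assume "i \<in> V"
  have "card (nbrs V E i - S) \<le> card ((nbrs V E i - Fa - S) \<union> (Fa \<inter> nbrs V E i))"
    using finite_nbrs by (intro card_mono) auto
  also have "\<dots> \<le> card (nbrs V E i - Fa - S) + card (Fa \<inter> nbrs V E i)"
    by (rule card_Un_le)
  finally show ?thesis
    using local_attack \<open>i \<in> V\<close> unfolding f_local_def by fastforce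
qed

lemma benign_step:
  assumes "i \<in> V - Fa"
  obtains y z where "x (Suc k) i = (1/3) *\<^sub>R (x k i + y + z)"
    and "y \<in> convex hull (x k ` (nbrs V E i - Fa))" and "z \<in> convex hull (x k ` (nbrs V E i - Fa))"
    and "\<And>c. CARD('d) * f + 1 \<le> card {j \<in> nbrs V E i - Fa. x k j $ coord_at k \<le> c}
           \<Longrightarrow> y $ coord_at k \<le> c"
    and "\<And>c. CARD('d) * f + 1 \<le> card {j \<in> nbrs V E i - Fa. c \<le> x k j $ coord_at k}
           \<Longrightarrow> c \<le> z $ coord_at k"
proof -
  let ?N = "nbrs V E i"
  have upd: "alg_update f k ?N (msg k i) (x k i) (x (Suc k) i)"
    and msg: "\<And>j. j \<in> ?N - Fa \<Longrightarrow> msg k i j = x k j"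
    using run assms unfolding resilient_run_def by blast+
  have outliers: "card (?N - (?N - Fa)) \<le> f"
    using local_attack assms unfolding f_local_def by (simp add: Int_commute Diff_Diff_Int)
  obtain y z where step: "x (Suc k) i = (1/3) *\<^sub>R (x k i + y + z)"
    and hull: "y \<in> convex hull (msg k i ` (?N - Fa))" "z \<in> convex hull (msg k i ` (?N - Fa))"
    and y: "\<And>c. CARD('d) * f + 1 \<le> card {j \<in> ?N. msg k i j $ coord_at k \<le> c}
             \<Longrightarrow> y $ coord_at k \<le> c"
    and z: "\<And>c. CARD('d) * f + 1 \<le> card {j \<in> ?N. c \<le> msg k i j $ coord_at k}
             \<Longrightarrow> c \<le> z $ coord_at k"
    using alg_update_bounds[OF upd finite_nbrs outliers] by blast
  have "msg k i ` (?N - Fa) = x k ` (?N - Fa)"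
    using msg by simp
  then have "y \<in> convex hull (x k ` (?N - Fa))" "z \<in> convex hull (x k ` (?N - Fa))"
    using hull by simp_all
  moreover have "y $ coord_at k \<le> c"
    if "CARD('d) * f + 1 \<le> card {j \<in> ?N - Fa. x k j $ coord_at k \<le> c}" for c
  proof (rule y)
    have "card {j \<in> ?N - Fa. x k j $ coord_at k \<le> c} \<le> card {j \<in> ?N. msg k i j $ coord_at k \<le> c}"
      using finite_nbrs msg by (intro card_mono) auto
    then show "CARD('d) * f + 1 \<le> card {j \<in> ?N. msg k i j $ coord_at k \<le> c}" using that by linarith
  qed
  moreover have "c \<le> z $ coord_at k"
    if "CARD('d) * f + 1 \<le> card {j \<in> ?N - Fa. c \<le> x k j $ coord_at k}" for c
  proof (rule z)
    have "card {j \<in> ?N - Fa. c \<le> x k j $ coord_at k} \<le> card {j \<in> ?N. c \<le> msg k i j $ coord_at k}"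
      using finite_nbrs msg by (intro card_mono) auto
    then show "CARD('d) * f + 1 \<le> card {j \<in> ?N. c \<le> msg k i j $ coord_at k}" using that by linarith
  qed
  ultimately show thesis
    using that[OF step] by blast
qed

lemma convex_hull_nbrs_le_max_state:
  assumes "v \<in> convex hull (x k ` (nbrs V E i - Fa))"
  shows "v $ q \<le> max_state k q"
proof (rule convex_hull_component_le[OF assms])
  fix a assume "a \<in> x k ` (nbrs V E i - Fa)"
  then show "a $ q \<le> max_state k q" using nbrs_subset state_le_max_state by fastforce
qed

lemma convex_hull_nbrs_ge_min_state:
  assumes "v \<in> convex hull (x k ` (nbrs V E i - Fa))"
  shows "min_state k q \<le> v $ q"
proof (rule convex_hull_component_ge[OF assms])
  fix a assume "a \<in> x k ` (nbrs V E i - Fa)"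
  then show "min_state k q \<le> a $ q" using nbrs_subset min_state_le_state by fastforce
qed

lemma state_Suc_le:
  assumes "i \<in> V - Fa"
  shows "x (Suc k) i $ q \<le> (x k i $ q + 2 * max_state k q) / 3"
proof -
  obtain y z where "x (Suc k) i = (1/3) *\<^sub>R (x k i + y + z)"
    and "y \<in> convex hull (x k ` (nbrs V E i - Fa))" "z \<in> convex hull (x k ` (nbrs V E i - Fa))"
    using benign_step[OF assms] .
  then show ?thesis
    using convex_hull_nbrs_le_max_state[of y k i q] convex_hull_nbrs_le_max_state[of z k i q] by simp
qed

lemma state_Suc_ge:
  assumes "i \<in> V - Fa"
  shows "(x k i $ q + 2 * min_state k q) / 3 \<le> x (Suc k) i $ q"
proof -
  obtain y z where "x (Suc k) i = (1/3) *\<^sub>R (x k i + y + z)"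
    and "y \<in> convex hull (x k ` (nbrs V E i - Fa))" "z \<in> convex hull (x k ` (nbrs V E i - Fa))"
    using benign_step[OF assms] .
  then show ?thesis
    using convex_hull_nbrs_ge_min_state[of y k i q] convex_hull_nbrs_ge_min_state[of z k i q] by simp
qed

lemma state_Suc_le_trimmed:
  assumes "i \<in> V - Fa" and "coord_at k = q"
    and "CARD('d) * f + 1 \<le> card {j \<in> nbrs V E i - Fa. x k j $ q \<le> c}"
  shows "x (Suc k) i $ q \<le> (x k i $ q + c + max_state k q) / 3"
proof -
  obtain y z where "x (Suc k) i = (1/3) *\<^sub>R (x k i + y + z)"
    and "z \<in> convex hull (x k ` (nbrs V E i - Fa))"
    and trimmed: "\<And>c. CARD('d) * f + 1 \<le> card {j \<in> nbrs V E i - Fa. x k j $ coord_at k \<le> c}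
                   \<Longrightarrow> y $ coord_at k \<le> c"
    by (rule benign_step[OF assms(1), of k]) (rule that; assumption)
  moreover have "y $ q \<le> c" using trimmed[of c] assms(2,3) by simp
  ultimately show ?thesis
    using convex_hull_nbrs_le_max_state[of z k i q] by simp
qed

lemma state_Suc_ge_trimmed:
  assumes "i \<in> V - Fa" and "coord_at k = q"
    and "CARD('d) * f + 1 \<le> card {j \<in> nbrs V E i - Fa. c \<le> x k j $ q}"
  shows "(x k i $ q + c + min_state k q) / 3 \<le> x (Suc k) i $ q"
proof -
  obtain y z where "x (Suc k) i = (1/3) *\<^sub>R (x k i + y + z)"
    and "y \<in> convex hull (x k ` (nbrs V E i - Fa))"
    and trimmed: "\<And>c. CARD('d) * f + 1 \<le> card {j \<in> nbrs V E i - Fa. c \<le> x k j $ coord_at k}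
                   \<Longrightarrow> c \<le> z $ coord_at k"
    by (rule benign_step[OF assms(1), of k]) (rule that; assumption)
  moreover have "c \<le> z $ q" using trimmed[of c] assms(2,3) by simp
  ultimately show ?thesis
    using convex_hull_nbrs_ge_min_state[of y k i q] by simp
qed

lemma max_state_Suc_le: "max_state (Suc k) q \<le> max_state k q"
proof -
  have "x (Suc k) i $ q \<le> max_state k q" if "i \<in> V - Fa" for i
    using state_Suc_le[OF that, of k q] state_le_max_state[OF that, of k q] by (simp add: field_simps)
  then show ?thesis
    unfolding max_state_def[of "Suc k"] using finite_V benign_nonempty by (simp add: Max_le_iff)
qed

lemma min_state_Suc_ge: "min_state k q \<le> min_state (Suc k) q"
proof -
  have "min_state k q \<le> x (Suc k) i $ q" if "i \<in> V - Fa" for i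
    using state_Suc_ge[OF that, of k q] min_state_le_state[OF that, of k q] by (simp add: field_simps)
  then show ?thesis
    unfolding min_state_def[of "Suc k"] using finite_V benign_nonempty by (simp add: Min_ge_iff)
qed

lemma max_state_antimono: "k \<le> k' \<Longrightarrow> max_state k' q \<le> max_state k q"
  using lift_Suc_antimono_le[of "\<lambda>k. max_state k q"] max_state_Suc_le by blast

lemma min_state_mono: "k \<le> k' \<Longrightarrow> min_state k q \<le> min_state k' q"
  using lift_Suc_mono_le[of "\<lambda>k. min_state k q"] min_state_Suc_ge by blast

lemma min_state_le_max_state: "min_state k q \<le> max_state k' q"
proof -
  obtain i where i: "i \<in> V - Fa" using benign_nonempty by blast
  have "min_state k q \<le> min_state (max k k') q" by (rule min_state_mono) simp
  also have "\<dots> \<le> x (max k k') i $ q" using min_state_le_state[OF i] .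
  also have "\<dots> \<le> max_state (max k k') q" using state_le_max_state[OF i] .
  also have "\<dots> \<le> max_state k' q" by (rule max_state_antimono) simp
  finally show ?thesis .
qed

lemma spread_nonneg: "0 \<le> spread k q"
  unfolding spread_def using min_state_le_max_state[of k q k] by simp

lemma spread_Suc_le: "spread (Suc k) q \<le> spread k q"
  unfolding spread_def using max_state_Suc_le[of k q] min_state_Suc_ge[of k q] by linarith

text \<open>An agent at least e below max_state k q is still at least e/3 below it after an
  update; starting from half the spread keeps the upper and lower sets disjoint.\<close>

definition upper_threshold :: "nat \<Rightarrow> 'd \<Rightarrow> nat \<Rightarrow> real" where
  "upper_threshold k q t = max_state k q - spread k q / (2 * 3 ^ t)"

definition lower_threshold :: "nat \<Rightarrow> 'd \<Rightarrow> nat \<Rightarrow> real" where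
  "lower_threshold k q t = min_state k q + spread k q / (2 * 3 ^ t)"

definition upper_set :: "nat \<Rightarrow> 'd \<Rightarrow> nat \<Rightarrow> 'v set" where
  "upper_set k q t = {i \<in> V - Fa. upper_threshold k q t < x (k + t) i $ q}"

definition lower_set :: "nat \<Rightarrow> 'd \<Rightarrow> nat \<Rightarrow> 'v set" where
  "lower_set k q t = {i \<in> V - Fa. x (k + t) i $ q < lower_threshold k q t}"

lemma upper_threshold_Suc:
  "upper_threshold k q (Suc t) = (upper_threshold k q t + 2 * max_state k q) / 3"
  unfolding upper_threshold_def by (simp add: field_simps)

lemma lower_threshold_Suc:
  "lower_threshold k q (Suc t) = (lower_threshold k q t + 2 * min_state k q) / 3"
  unfolding lower_threshold_def by (simp add: field_simps)

lemma lower_threshold_le_upper_threshold: "lower_threshold k q t \<le> upper_threshold k q t"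
proof -
  have "(2::real) \<le> 2 * 3 ^ t" by simp
  then have "spread k q / (2 * 3 ^ t) \<le> spread k q / 2"
    using spread_nonneg[of k q] by (intro divide_left_mono) auto
  then show ?thesis
    unfolding lower_threshold_def upper_threshold_def using spread_def[of k q] by linarith
qed

lemma upper_lower_set_disjoint: "upper_set k q t \<inter> lower_set k q t = {}"
  unfolding upper_set_def lower_set_def
  using lower_threshold_le_upper_threshold[of k q t] by auto

lemma finite_upper_set: "finite (upper_set k q t)"
  unfolding upper_set_def using finite_V by simp

lemma finite_lower_set: "finite (lower_set k q t)"
  unfolding lower_set_def using finite_V by simp

lemma card_upper_lower_set_le: "card (upper_set k q t) + card (lower_set k q t) \<le> card (V - Fa)"
proof -
  have "card (upper_set k q t) + card (lower_set k q t) = card (upper_set k q t \<union> lower_set k q t)"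
    using upper_lower_set_disjoint by (simp add: card_Un_disjoint finite_upper_set finite_lower_set)
  also have "\<dots> \<le> card (V - Fa)"
    using finite_V by (intro card_mono) (auto simp: upper_set_def lower_set_def)
  finally show ?thesis .
qed

lemma upper_set_Suc_subset: "upper_set k q (Suc t) \<subseteq> upper_set k q t"
proof
  fix i assume i: "i \<in> upper_set k q (Suc t)"
  then have benign: "i \<in> V - Fa" by (simp add: upper_set_def)
  show "i \<in> upper_set k q t"
  proof (rule ccontr)
    assume "i \<notin> upper_set k q t"
    then have "x (k + t) i $ q \<le> upper_threshold k q t" using benign by (simp add: upper_set_def)
    moreover have "max_state (k + t) q \<le> max_state k q" by (rule max_state_antimono) simp
    ultimately have "x (k + Suc t) i $ q \<le> upper_threshold k q (Suc t)"
      using state_Suc_le[OF benign, of "k + t" q] by (simp add: upper_threshold_Suc field_simps)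
    then show False using i by (simp add: upper_set_def)
  qed
qed

lemma lower_set_Suc_subset: "lower_set k q (Suc t) \<subseteq> lower_set k q t"
proof
  fix i assume i: "i \<in> lower_set k q (Suc t)"
  then have benign: "i \<in> V - Fa" by (simp add: lower_set_def)
  show "i \<in> lower_set k q t"
  proof (rule ccontr)
    assume "i \<notin> lower_set k q t"
    then have "lower_threshold k q t \<le> x (k + t) i $ q" using benign by (simp add: lower_set_def)
    moreover have "min_state k q \<le> min_state (k + t) q" by (rule min_state_mono) simp
    ultimately have "lower_threshold k q (Suc t) \<le> x (k + Suc t) i $ q"
      using state_Suc_ge[OF benign, of "k + t" q] by (simp add: lower_threshold_Suc field_simps)
    then show False using i by (simp add: lower_set_def)
  qed
qed

lemma upper_set_antimono: "t \<le> t' \<Longrightarrow> upper_set k q t' \<subseteq> upper_set k q t"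
  using lift_Suc_antimono_le[of "upper_set k q"] upper_set_Suc_subset by blast

lemma lower_set_antimono: "t \<le> t' \<Longrightarrow> lower_set k q t' \<subseteq> lower_set k q t"
  using lift_Suc_antimono_le[of "lower_set k q"] lower_set_Suc_subset by blast

lemma upper_set_Suc_notin:
  assumes i: "i \<in> upper_set k q t" and coord: "coord_at (k + t) = q"
    and outside: "(CARD('d) + 1) * f + 1 \<le> card (nbrs V E i - upper_set k q t)"
  shows "i \<notin> upper_set k q (Suc t)"
proof -
  have benign: "i \<in> V - Fa" using i by (simp add: upper_set_def)
  have "nbrs V E i - Fa - upper_set k q t = {j \<in> nbrs V E i - Fa. x (k + t) j $ q \<le> upper_threshold k q t}"
    using nbrs_subset by (auto simp: upper_set_def)
  then have "CARD('d) * f + 1 \<le> card {j \<in> nbrs V E i - Fa. x (k + t) j $ q \<le> upper_threshold k q t}"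
    using outside card_nbrs_diff_le[of i "upper_set k q t"] benign by simp
  then have "x (Suc (k + t)) i $ q \<le> (x (k + t) i $ q + upper_threshold k q t + max_state (k + t) q) / 3"
    by (rule state_Suc_le_trimmed[OF benign coord])
  moreover have "max_state (k + t) q \<le> max_state k q" by (rule max_state_antimono) simp
  moreover have "x (k + t) i $ q \<le> max_state (k + t) q" by (rule state_le_max_state[OF benign])
  ultimately have "x (k + Suc t) i $ q \<le> upper_threshold k q (Suc t)"
    by (simp add: upper_threshold_Suc field_simps)
  then show ?thesis by (simp add: upper_set_def)
qed

lemma lower_set_Suc_notin:
  assumes i: "i \<in> lower_set k q t" and coord: "coord_at (k + t) = q"
    and outside: "(CARD('d) + 1) * f + 1 \<le> card (nbrs V E i - lower_set k q t)"
  shows "i \<notin> lower_set k q (Suc t)"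
proof -
  have benign: "i \<in> V - Fa" using i by (simp add: lower_set_def)
  have "nbrs V E i - Fa - lower_set k q t = {j \<in> nbrs V E i - Fa. lower_threshold k q t \<le> x (k + t) j $ q}"
    using nbrs_subset by (auto simp: lower_set_def)
  then have "CARD('d) * f + 1 \<le> card {j \<in> nbrs V E i - Fa. lower_threshold k q t \<le> x (k + t) j $ q}"
    using outside card_nbrs_diff_le[of i "lower_set k q t"] benign by simp
  then have "(x (k + t) i $ q + lower_threshold k q t + min_state (k + t) q) / 3 \<le> x (Suc (k + t)) i $ q"
    by (rule state_Suc_ge_trimmed[OF benign coord])
  moreover have "min_state k q \<le> min_state (k + t) q" by (rule min_state_mono) simp
  moreover have "min_state (k + t) q \<le> x (k + t) i $ q" by (rule min_state_le_state[OF benign])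
  ultimately have "lower_threshold k q (Suc t) \<le> x (k + Suc t) i $ q"
    by (simp add: lower_threshold_Suc field_simps)
  then show ?thesis by (simp add: lower_set_def)
qed

lemma upper_or_lower_set_shrinks:
  assumes coord: "coord_at (k + t) = q"
    and nonempty: "upper_set k q t \<noteq> {}" "lower_set k q t \<noteq> {}"
  shows "card (upper_set k q (Suc t)) + card (lower_set k q (Suc t))
           < card (upper_set k q t) + card (lower_set k q t)"
proof -
  let ?U = "upper_set k q t" and ?L = "lower_set k q t"
  have "?U \<subset> V \<and> ?L \<subset> V \<and> ?U \<noteq> {} \<and> ?L \<noteq> {} \<and> ?U \<inter> ?L = {}"
    using upper_lower_set_disjoint[of k q t] nonempty
    by (auto simp: upper_set_def lower_set_def)
  then have "(\<exists>i\<in>?U. (CARD('d) + 1) * f + 1 \<le> card (nbrs V E i - ?U))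
      \<or> (\<exists>i\<in>?L. (CARD('d) + 1) * f + 1 \<le> card (nbrs V E i - ?L))"
    by (rule robust[unfolded r_robust_def, rule_format])
  then consider i where "i \<in> ?U" "(CARD('d) + 1) * f + 1 \<le> card (nbrs V E i - ?U)"
    | i where "i \<in> ?L" "(CARD('d) + 1) * f + 1 \<le> card (nbrs V E i - ?L)"
    by blast
  then show ?thesis
  proof cases
    case 1
    then have "i \<notin> upper_set k q (Suc t)" by (intro upper_set_Suc_notin[OF _ coord])
    then have "upper_set k q (Suc t) \<subset> ?U"
      using \<open>i \<in> ?U\<close> upper_set_Suc_subset by blast
    then have "card (upper_set k q (Suc t)) < card ?U"
      by (rule psubset_card_mono[OF finite_upper_set])
    moreover have "card (lower_set k q (Suc t)) \<le> card ?L"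
      by (rule card_mono[OF finite_lower_set lower_set_Suc_subset])
    ultimately show ?thesis by linarith
  next
    case 2
    then have "i \<notin> lower_set k q (Suc t)" by (intro lower_set_Suc_notin[OF _ coord])
    then have "lower_set k q (Suc t) \<subset> ?L"
      using \<open>i \<in> ?L\<close> lower_set_Suc_subset by blast
    then have "card (lower_set k q (Suc t)) < card ?L"
      by (rule psubset_card_mono[OF finite_lower_set])
    moreover have "card (upper_set k q (Suc t)) \<le> card ?U"
      by (rule card_mono[OF finite_upper_set upper_set_Suc_subset])
    ultimately show ?thesis by linarith
  qed
qed

definition contraction_period :: nat where
  "contraction_period = CARD('d) * (card (V - Fa) + 1)"

lemma upper_or_lower_set_empty:
  "upper_set k q contraction_period = {} \<or> lower_set k q contraction_period = {}"
proof -
  define d where "d = CARD('d)"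
  define n where "n = card (V - Fa)"
  define pot where "pot t = card (upper_set k q t) + card (lower_set k q t)" for t
  define empty where "empty t \<longleftrightarrow> upper_set k q t = {} \<or> lower_set k q t = {}" for t
  have pot_antimono: "pot t' \<le> pot t" if "t \<le> t'" for t t'
    unfolding pot_def using upper_set_antimono[OF that] lower_set_antimono[OF that]
    by (intro add_mono card_mono finite_upper_set finite_lower_set)
  have empty_mono: "empty t \<Longrightarrow> t \<le> t' \<Longrightarrow> empty t'" for t t'
    unfolding empty_def using upper_set_antimono lower_set_antimono by blast
  obtain r where "r < d" and r: "coord_at (k + r) = q"
    using coord_at_within_period unfolding d_def by blast
  \<comment> \<open>pot is at most n and drops at every step sorting by q, i.e. once per window of d steps.\<close>
  have "empty (r + d * j) \<or> pot (r + d * j) + j \<le> n" for j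
  proof (induction j)
    case 0
    show ?case using card_upper_lower_set_le unfolding pot_def n_def by simp
  next
    case (Suc j)
    let ?s = "r + d * j"
    show ?case
    proof (cases "empty (r + d * Suc j)")
      case False
      then have "\<not> empty ?s" using empty_mono[of ?s "r + d * Suc j"] by auto
      moreover have "coord_at (k + r + CARD('d) * j) = (coord_at (k + r) :: 'd)"
        by (rule coord_at_add_period)
      then have "coord_at (k + ?s) = q"
        using r unfolding d_def by (simp add: add.assoc)
      ultimately have "pot (Suc ?s) < pot ?s"
        unfolding pot_def empty_def by (intro upper_or_lower_set_shrinks) auto
      moreover have "pot (r + d * Suc j) \<le> pot (Suc ?s)"
        using \<open>r < d\<close> by (intro pot_antimono) simp
      ultimately show ?thesis using Suc.IH \<open>\<not> empty ?s\<close> by linarith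
    qed simp
  qed
  from this[of n] have "empty (r + d * n)"
    unfolding empty_def pot_def by (auto simp: finite_upper_set finite_lower_set)
  then have "empty contraction_period"
    using \<open>r < d\<close> by (elim empty_mono) (simp add: contraction_period_def d_def n_def)
  then show ?thesis unfolding empty_def .
qed

lemma spread_contraction:
  "spread (k + contraction_period) q \<le> (1 - 1 / (2 * 3 ^ contraction_period)) * spread k q"
proof -
  let ?T = contraction_period
  have "(1 - 1 / (2 * 3 ^ ?T)) * spread k q = spread k q - spread k q / (2 * 3 ^ ?T)"
    by (simp add: algebra_simps)
  moreover have "max_state (k + ?T) q \<le> max_state k q" by (rule max_state_antimono) simp
  moreover have "min_state k q \<le> min_state (k + ?T) q" by (rule min_state_mono) simp
  moreover consider "upper_set k q ?T = {}" | "lower_set k q ?T = {}"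
    using upper_or_lower_set_empty by blast
  then have "max_state (k + ?T) q \<le> upper_threshold k q ?T \<or> lower_threshold k q ?T \<le> min_state (k + ?T) q"
  proof cases
    case 1
    then have "\<forall>i\<in>V - Fa. x (k + ?T) i $ q \<le> upper_threshold k q ?T"
      by (auto simp: upper_set_def)
    then show ?thesis
      unfolding max_state_def using finite_V benign_nonempty by (simp add: Max_le_iff)
  next
    case 2
    then have "\<forall>i\<in>V - Fa. lower_threshold k q ?T \<le> x (k + ?T) i $ q"
      by (auto simp: lower_set_def)
    then show ?thesis
      unfolding min_state_def using finite_V benign_nonempty by (simp add: Min_ge_iff)
  qed
  ultimately show ?thesis
    unfolding spread_def[of "k + ?T"] upper_threshold_def lower_threshold_def
    using spread_def[of k q] by linarith
qed

lemma exponential_consensus: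
  "\<exists>xbar :: real^'d::enum. \<exists>C \<ge> 0. \<exists>\<gamma>::real. 0 \<le> \<gamma> \<and> \<gamma> < 1 \<and>
     (\<forall>k. \<forall>i\<in>V - Fa. norm (x k i - xbar) \<le> C * \<gamma> ^ k)"
proof -
  define w where "w k = (\<Sum>q\<in>UNIV. spread k q)" for k
  define c :: real where "c = 1 - 1 / (2 * 3 ^ contraction_period)"
  have "(1::real) \<le> 3 ^ contraction_period" by simp
  then have "(1::real) < 2 * 3 ^ contraction_period" by linarith
  then have "0 < c" "c < 1" unfolding c_def by (simp_all add: field_simps)
  have antimono: "w (Suc k) \<le> w k" for k
    unfolding w_def by (intro sum_mono spread_Suc_le)
  have contract: "w (k + contraction_period) \<le> c * w k" for k
    unfolding w_def c_def sum_distrib_left by (intro sum_mono spread_contraction)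
  have "0 < contraction_period" by (simp add: contraction_period_def)
  moreover have "0 \<le> w 0" unfolding w_def by (intro sum_nonneg spread_nonneg)
  ultimately obtain C \<gamma> where "0 \<le> C" "0 \<le> \<gamma>" "\<gamma> < 1" and decay: "\<And>k. w k \<le> C * \<gamma> ^ k"
    using periodic_contraction_geometric_decay[OF antimono contract _ \<open>0 < c\<close> \<open>c < 1\<close>] by blast
  define xbar :: "real^'d::enum" where "xbar = (\<chi> q. Sup (range (\<lambda>k. min_state k q)))"
  have "min_state k q \<le> xbar $ q" "xbar $ q \<le> max_state k q" for k q
    unfolding xbar_def using min_state_le_max_state
    by (auto intro!: cSup_upper cSup_least bdd_aboveI2)
  then have "norm (x k i - xbar) \<le> w k" if "i \<in> V - Fa" for k i
  proof -
    have "norm (x k i - xbar) \<le> (\<Sum>q\<in>UNIV. \<bar>(x k i - xbar) $ q\<bar>)" by (rule norm_le_l1_cart)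
    also have "\<dots> \<le> w k"
      unfolding w_def
    proof (rule sum_mono)
      fix q
      show "\<bar>(x k i - xbar) $ q\<bar> \<le> spread k q"
        using state_le_max_state[OF that, of k q] min_state_le_state[OF that, of k q]
          \<open>min_state k q \<le> xbar $ q\<close> \<open>xbar $ q \<le> max_state k q\<close>
        unfolding spread_def by (simp add: abs_le_iff)
    qed
    finally show ?thesis .
  qed
  then have "\<forall>k. \<forall>i\<in>V - Fa. norm (x k i - xbar) \<le> C * \<gamma> ^ k"
    using decay order_trans by blast
  then show ?thesis
    using \<open>0 \<le> C\<close> \<open>0 \<le> \<gamma>\<close> \<open>\<gamma> < 1\<close> by blast
qed

end

theorem proposition2:
  fixes V :: "'v set" and E :: "'v \<Rightarrow> 'v \<Rightarrow> bool" and Fa :: "'v set" and f :: nat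
    and x :: "nat \<Rightarrow> 'v \<Rightarrow> real^'d::enum" and msg :: "nat \<Rightarrow> 'v \<Rightarrow> 'v \<Rightarrow> real^'d::enum"
  assumes "undirected_graph V E"
    and "\<forall>i\<in>V. card (nbrs V E i) \<ge> (CARD('d::enum) + 1) * f + 1"
    and "Fa \<subseteq> V"
    and "f_local V E Fa f"
    and "r_robust V E ((CARD('d::enum) + 1) * f + 1)"
    and "resilient_run V E Fa f x msg"
  shows "\<exists>xbar :: real^'d::enum. \<exists>C \<ge> 0. \<exists>\<gamma>::real. 0 \<le> \<gamma> \<and> \<gamma> < 1 \<and>
           (\<forall>k. \<forall>i\<in>V - Fa. norm (x k i - xbar) \<le> C * \<gamma> ^ k)"
proof (cases "V - Fa = {}")
  case True
  then show ?thesis by (intro exI[of _ 0]) auto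
next
  case False
  have "finite V" using assms(1) unfolding undirected_graph_def by blast
  then interpret resilient_consensus V E Fa f x msg
    using assms(4-6) False by unfold_locales
  show ?thesis by (rule exponential_consensus)
qed

end
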